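(* Let $\mathcal{A}$ be a complete rpoNFA. Then $L(\mathcal{A})$ is $\mathrm{depth}(\mathcal{A})$-$\mathcal{R}$-trivial.
   Context: An NFA $\mathcal{A}=(Q,\Sigma,\cdot,I,F)$ with $\cdot:Q\times\Sigma\to 2^Q$ is complete if $q\cdot a\neq\emptyset$ for all $q\in Q$, $a\in\Sigma$. A poNFA is an NFA whose reachability relation ($p\le q$ iff $q\in p\cdot w$ for some word $w$) is a partial order; an rpoNFA is a poNFA such that for every state $q$ and letter $a$, $q\in q\cdot a$ implies $q\cdot a=\{q\}$. A path is simple if all its states are pairwise distinct; $\mathrm{depth}(\mathcal{A})$ is the number of input symbols on a longest simple path of $\mathcal{A}$ starting in an initial state. $\mathrm{sub}_k(v)$ is the set of subsequences (scattered subwords) of $v$ of length at most $k$; $u\sim_k v$ iff $\mathrm{sub}_k(u)=\mathrm{sub}_k(v)$; $x\sim^{\mathcal{R}}_k y$ iff every prefix of $x$ is $\sim_k$-equivalent to some prefix of $y$ and every prefix of $y$ is $\sim_k$-equivalent to some prefix of $x$. A language is $k$-$\mathcal{R}$-trivial if it is a union of $\sim^{\mathcal{R}}_k$-classes. *)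

theory Defs
  imports Main "HOL-Library.Sublist"
begin

definition nfa :: "'q set \<Rightarrow> 'a set \<Rightarrow> ('q \<Rightarrow> 'a \<Rightarrow> 'q set) \<Rightarrow> 'q set \<Rightarrow> 'q set \<Rightarrow> bool" where
  "nfa Q Sig delta I F \<longleftrightarrow> finite Q \<and> finite Sig \<and> I \<subseteq> Q \<and> F \<subseteq> Q \<and>
     (\<forall>q\<in>Q. \<forall>a\<in>Sig. delta q a \<subseteq> Q)"

fun steps :: "('q \<Rightarrow> 'a \<Rightarrow> 'q set) \<Rightarrow> 'q set \<Rightarrow> 'a list \<Rightarrow> 'q set" where
  "steps delta S [] = S"
| "steps delta S (a # w) = steps delta (\<Union>q\<in>S. delta q a) w"

definition lang :: "'a set \<Rightarrow> ('q \<Rightarrow> 'a \<Rightarrow> 'q set) \<Rightarrow> 'q set \<Rightarrow> 'q set \<Rightarrow> 'a list set" where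
  "lang Sig delta I F = {w \<in> lists Sig. steps delta I w \<inter> F \<noteq> {}}"

definition complete_nfa :: "'q set \<Rightarrow> 'a set \<Rightarrow> ('q \<Rightarrow> 'a \<Rightarrow> 'q set) \<Rightarrow> bool" where
  "complete_nfa Q Sig delta \<longleftrightarrow> (\<forall>q\<in>Q. \<forall>a\<in>Sig. delta q a \<noteq> {})"

definition reach :: "'a set \<Rightarrow> ('q \<Rightarrow> 'a \<Rightarrow> 'q set) \<Rightarrow> 'q \<Rightarrow> 'q \<Rightarrow> bool" where
  "reach Sig delta p q \<longleftrightarrow> (\<exists>w\<in>lists Sig. q \<in> steps delta {p} w)"

text \<open>The reachability relation is always reflexive and transitive; it is a partial
  order iff it is antisymmetric (on Q).\<close>
definition poNFA :: "'q set \<Rightarrow> 'a set \<Rightarrow> ('q \<Rightarrow> 'a \<Rightarrow> 'q set) \<Rightarrow> 'q set \<Rightarrow> 'q set \<Rightarrow> bool" where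
  "poNFA Q Sig delta I F \<longleftrightarrow> nfa Q Sig delta I F \<and>
     (\<forall>p\<in>Q. \<forall>q\<in>Q. reach Sig delta p q \<and> reach Sig delta q p \<longrightarrow> p = q)"

definition rpoNFA :: "'q set \<Rightarrow> 'a set \<Rightarrow> ('q \<Rightarrow> 'a \<Rightarrow> 'q set) \<Rightarrow> 'q set \<Rightarrow> 'q set \<Rightarrow> bool" where
  "rpoNFA Q Sig delta I F \<longleftrightarrow> poNFA Q Sig delta I F \<and>
     (\<forall>q\<in>Q. \<forall>a\<in>Sig. q \<in> delta q a \<longrightarrow> delta q a = {q})"

definition simple_init_path :: "'q set \<Rightarrow> 'a set \<Rightarrow> ('q \<Rightarrow> 'a \<Rightarrow> 'q set) \<Rightarrow> 'q set \<Rightarrow>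
    'q list \<Rightarrow> 'a list \<Rightarrow> bool" where
  "simple_init_path Q Sig delta I qs ws \<longleftrightarrow>
     length qs = Suc (length ws) \<and> set qs \<subseteq> Q \<and> ws \<in> lists Sig \<and>
     hd qs \<in> I \<and> distinct qs \<and>
     (\<forall>i < length ws. qs ! Suc i \<in> delta (qs ! i) (ws ! i))"

definition depth :: "'q set \<Rightarrow> 'a set \<Rightarrow> ('q \<Rightarrow> 'a \<Rightarrow> 'q set) \<Rightarrow> 'q set \<Rightarrow> nat" where
  "depth Q Sig delta I =
     Max {length ws | qs ws. simple_init_path Q Sig delta I qs ws}"

definition sub_k :: "nat \<Rightarrow> 'a list \<Rightarrow> 'a list set" where
  "sub_k k v = {u. subseq u v \<and> length u \<le> k}"

definition sim_k :: "nat \<Rightarrow> 'a list \<Rightarrow> 'a list \<Rightarrow> bool" where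
  "sim_k k u v \<longleftrightarrow> sub_k k u = sub_k k v"

definition simR_k :: "nat \<Rightarrow> 'a list \<Rightarrow> 'a list \<Rightarrow> bool" where
  "simR_k k x y \<longleftrightarrow>
     (\<forall>x'. prefix x' x \<longrightarrow> (\<exists>y'. prefix y' y \<and> sim_k k x' y')) \<and>
     (\<forall>y'. prefix y' y \<longrightarrow> (\<exists>x'. prefix x' x \<and> sim_k k y' x'))"

definition k_R_trivial :: "nat \<Rightarrow> 'a set \<Rightarrow> 'a list set \<Rightarrow> bool" where
  "k_R_trivial k Sig L \<longleftrightarrow>
     (\<exists>W \<subseteq> lists Sig. L = (\<Union>w\<in>W. {v \<in> lists Sig. simR_k k v w}))"

end

theory Submission
  imports Defs
begin

text \<open>Induction on k along the run from a state q. The letters looping at q (in an rpoNFA they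
  leave q fixed) can be read freely; the first other letter a moves q to a state of strictly
  smaller depth. Since x ~R_(k+1) y forces corresponding prefixes of both words to have the same
  letters, y leaves the loop at q by the same letter a, and the remaining suffixes are
  ~R_k-equivalent.\<close>

lemma steps_append: "steps delta S (u @ w) = steps delta (steps delta S u) w"
  by (induction u arbitrary: S) auto

lemma steps_eq_UN_singleton: "steps delta S w = (\<Union>q\<in>S. steps delta {q} w)"
proof (induction w arbitrary: S)
  case (Cons a w)
  have successors: "steps delta (delta q a) w = (\<Union>p\<in>delta q a. steps delta {p} w)" for q
    by (rule Cons.IH)
  show ?case
    by (simp add: Cons.IH[of "\<Union>q\<in>S. delta q a"] successors)
qed simp

lemma steps_self_loops:
  assumes "\<forall>b\<in>set u. delta q b = {q}"
  shows "steps delta {q} u = {q}"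
  using assms by (induction u) auto

lemma steps_first_exit:
  assumes "\<forall>b\<in>set u0. delta q b = {q}"
  shows "steps delta {q} (u0 @ a # u) = (\<Union>p\<in>delta q a. steps delta {p} u)"
  using assms by (simp add: steps_append steps_self_loops steps_eq_UN_singleton[of _ "delta q a"])

lemma simR_k_refl: "simR_k k w w"
  unfolding simR_k_def sim_k_def by blast

lemma simR_k_sym: "simR_k k u v \<Longrightarrow> simR_k k v u"
  unfolding simR_k_def by blast

lemma sim_k_Suc_imp_set_eq:
  assumes "sim_k (Suc k) u v"
  shows "set u = set v"
proof -
  have "b \<in> set u \<longleftrightarrow> [b] \<in> sub_k (Suc k) u" "b \<in> set v \<longleftrightarrow> [b] \<in> sub_k (Suc k) v" for b
    by (simp_all add: sub_k_def subseq_singleton_left)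
  then show ?thesis using assms unfolding sim_k_def by blast
qed

lemma subseq_Cons_first_occurrence:
  assumes "subseq (a # s) (v0 @ a # y)" "a \<notin> set v0"
  shows "subseq s y"
  using assms by (induction v0) (auto dest: subseq_Cons2_neq)

lemma sim_k_Suc_cancel_first_occurrence:
  assumes "sim_k (Suc k) (u0 @ a # x) (v0 @ a # y)" "a \<notin> set u0" "a \<notin> set v0"
  shows "sim_k k x y"
proof -
  have transfer: "subseq s y'"
    if "sim_k (Suc k) (u0' @ a # x') (v0' @ a # y')" "a \<notin> set v0'" "subseq s x'" "length s \<le> k"
    for s u0' x' v0' y'
  proof -
    have "subseq (a # s) (u0' @ a # x')"
      using that(3) by (intro subseq_drop_many) simp
    then have "a # s \<in> sub_k (Suc k) (u0' @ a # x')"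
      using that(4) by (simp add: sub_k_def)
    then have "a # s \<in> sub_k (Suc k) (v0' @ a # y')"
      using that(1) unfolding sim_k_def by blast
    then have "subseq (a # s) (v0' @ a # y')" unfolding sub_k_def by blast
    then show ?thesis using that(2) by (rule subseq_Cons_first_occurrence)
  qed
  have "sim_k (Suc k) (v0 @ a # y) (u0 @ a # x)"
    using assms(1) by (simp add: sim_k_def)
  then show ?thesis
    using transfer[OF assms(1,3)] transfer[OF _ assms(2)] unfolding sim_k_def sub_k_def by blast
qed

lemma prefix_through_first_exit:
  assumes "prefix z (u0 @ a # u)" "set u0 \<subseteq> S" "\<not> set z \<subseteq> S"
  shows "\<exists>x. z = u0 @ a # x \<and> prefix x u"
proof -
  have "\<not> prefix z u0" using assms(2,3) set_mono_prefix by blast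
  then obtain r where "z = u0 @ r" "prefix r (a # u)" using assms(1) prefix_append by blast
  moreover have "r \<noteq> []" using calculation(1) assms(2,3) by auto
  ultimately show ?thesis by (auto simp: prefix_Cons)
qed

lemma simR_k_Suc_suffix_half:
  assumes "simR_k (Suc k) u v"
    and "u = u0 @ a # u'" "set u0 \<subseteq> S" "a \<notin> S"
    and "v = v0 @ a # v'" "set v0 \<subseteq> S"
    and "prefix x u'"
  shows "\<exists>y. prefix y v' \<and> sim_k k x y"
proof -
  have "prefix (u0 @ a # x) u" using assms(2,7) by simp
  then obtain z where z: "prefix z v" "sim_k (Suc k) (u0 @ a # x) z"
    using assms(1) unfolding simR_k_def by blast
  have "a \<in> set z" using sim_k_Suc_imp_set_eq[OF z(2)] by auto
  then obtain y where y: "z = v0 @ a # y" "prefix y v'"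
    using prefix_through_first_exit[of z v0 a v' S] z(1) assms(4-6) by blast
  have "sim_k k x y"
    using sim_k_Suc_cancel_first_occurrence[of k u0 a x v0 y] z(2) y(1) assms(3,4,6) by blast
  then show ?thesis using y(2) by blast
qed

lemma simR_k_Suc_split_first_exit:
  assumes "simR_k (Suc k) u v" "u = u0 @ a # u'" "set u0 \<subseteq> S" "a \<notin> S"
  shows "\<exists>v0 v'. v = v0 @ a # v' \<and> set v0 \<subseteq> S \<and> simR_k k u' v'"
proof -
  have "prefix (u0 @ [a]) u" using assms(2) by simp
  then obtain z where z: "prefix z v" "sim_k (Suc k) (u0 @ [a]) z"
    using assms(1) unfolding simR_k_def by blast
  have "a \<in> set v" using sim_k_Suc_imp_set_eq[OF z(2)] set_mono_prefix[OF z(1)] by auto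
  then obtain v0 b v' where v: "v = v0 @ b # v'" "set v0 \<subseteq> S" "b \<notin> S"
    using split_list_first_prop[of v "\<lambda>c. c \<notin> S"] assms(4) by blast
  have "prefix (v0 @ [b]) v" using v(1) by simp
  then obtain z' where z': "prefix z' u" "sim_k (Suc k) (v0 @ [b]) z'"
    using assms(1) unfolding simR_k_def by blast
  have "b \<in> set z'" using sim_k_Suc_imp_set_eq[OF z'(2)] by auto
  then obtain x where "z' = u0 @ a # x"
    using prefix_through_first_exit[of z' u0 a u' S] z'(1) assms(2,3) v(3) by blast
  then have "a \<in> set (v0 @ [b])" using sim_k_Suc_imp_set_eq[OF z'(2)] by auto
  then have ab: "a = b" using v(2) assms(4) by auto
  have "simR_k k u' v'"
    unfolding simR_k_def
    using simR_k_Suc_suffix_half[OF assms(1-4) v(1)[unfolded ab[symmetric]] v(2)]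
      simR_k_Suc_suffix_half[OF simR_k_sym[OF assms(1)] v(1)[unfolded ab[symmetric]] v(2) assms(4,2,3)]
    by blast
  then show ?thesis using v ab by blast
qed

lemma k_R_trivial_if_closed:
  assumes "L \<subseteq> lists Sig" "\<And>v w. w \<in> L \<Longrightarrow> v \<in> lists Sig \<Longrightarrow> simR_k k v w \<Longrightarrow> v \<in> L"
  shows "k_R_trivial k Sig L"
proof -
  have "L = (\<Union>w\<in>L. {v \<in> lists Sig. simR_k k v w})"
  proof (intro equalityI subsetI)
    fix v assume "v \<in> L"
    then show "v \<in> (\<Union>w\<in>L. {v \<in> lists Sig. simR_k k v w})"
      using assms(1) simR_k_refl[of k v] by blast
  next
    fix v assume "v \<in> (\<Union>w\<in>L. {v \<in> lists Sig. simR_k k v w})"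
    then show "v \<in> L" using assms(2) by blast
  qed
  then show ?thesis using assms(1) unfolding k_R_trivial_def by blast
qed

definition depth_at_most :: "'q set \<Rightarrow> 'a set \<Rightarrow> ('q \<Rightarrow> 'a \<Rightarrow> 'q set) \<Rightarrow> 'q \<Rightarrow> nat \<Rightarrow> bool" where
  "depth_at_most Q Sig delta q k \<longleftrightarrow>
     (\<forall>qs ws. simple_init_path Q Sig delta {q} qs ws \<longrightarrow> length ws \<le> k)"

lemma simple_init_path_reach:
  assumes "simple_init_path Q Sig delta {p} qs ws" "i < length qs"
  shows "reach Sig delta p (qs ! i)"
  using assms(2)
proof (induction i)
  case 0
  have "qs \<noteq> []" "hd qs = p" using assms(1) unfolding simple_init_path_def by auto
  then have "qs ! 0 = p" by (simp add: hd_conv_nth)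
  then show ?case unfolding reach_def by (intro bexI[of _ "[]"]) auto
next
  case (Suc i)
  then obtain w where w: "w \<in> lists Sig" "qs ! i \<in> steps delta {p} w"
    unfolding reach_def by auto
  have "qs ! Suc i \<in> delta (qs ! i) (ws ! i)" "ws ! i \<in> Sig"
    using Suc.prems assms(1) unfolding simple_init_path_def by auto
  then have "qs ! Suc i \<in> steps delta {p} (w @ [ws ! i])"
    using w by (auto simp: steps_append)
  then show ?case using w(1) \<open>ws ! i \<in> Sig\<close> unfolding reach_def by force
qed

text \<open>Antisymmetry of reachability keeps q off every path starting at its successor p.\<close>

lemma simple_init_path_prepend_predecessor:
  assumes "poNFA Q Sig delta I F" "simple_init_path Q Sig delta {p} qs ws"
    and "q \<in> Q" "a \<in> Sig" "p \<in> delta q a" "p \<noteq> q"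
  shows "simple_init_path Q Sig delta {q} (q # qs) (a # ws)"
proof -
  have pQ: "p \<in> Q" using assms(1,3-5) unfolding poNFA_def nfa_def by blast
  have "reach Sig delta q p" unfolding reach_def
    using assms(4,5) by (intro bexI[of _ "[a]"]) auto
  then have "q \<notin> set qs"
    using simple_init_path_reach[OF assms(2)] assms(1,3,6) pQ
    unfolding poNFA_def by (metis in_set_conv_nth)
  moreover have "qs ! 0 = p" using assms(2) unfolding simple_init_path_def by (cases qs) auto
  then have "(q # qs) ! Suc i \<in> delta ((q # qs) ! i) ((a # ws) ! i)" if "i < length (a # ws)" for i
    using that assms(2,5) unfolding simple_init_path_def by (cases i) auto
  ultimately show ?thesis
    using assms(2-4) unfolding simple_init_path_def by auto
qed

lemma depth_at_most_0_sink:
  assumes "poNFA Q Sig delta I F" "depth_at_most Q Sig delta q 0"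
    and "q \<in> Q" "a \<in> Sig" "p \<in> delta q a"
  shows "p = q"
proof (rule ccontr)
  assume "p \<noteq> q"
  have "p \<in> Q" using assms(1,3-5) unfolding poNFA_def nfa_def by blast
  then have "simple_init_path Q Sig delta {p} [p] []" unfolding simple_init_path_def by auto
  then have "simple_init_path Q Sig delta {q} [q, p] [a]"
    using simple_init_path_prepend_predecessor[OF assms(1) _ assms(3-5) \<open>p \<noteq> q\<close>] by blast
  then show False using assms(2) unfolding depth_at_most_def by fastforce
qed

lemma depth_at_most_Suc_successor:
  assumes "poNFA Q Sig delta I F" "depth_at_most Q Sig delta q (Suc k)"
    and "q \<in> Q" "a \<in> Sig" "p \<in> delta q a" "p \<noteq> q"
  shows "depth_at_most Q Sig delta p k"
  using assms simple_init_path_prepend_predecessor[OF assms(1) _ assms(3-6)]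
  unfolding depth_at_most_def by fastforce

lemma depth_at_most_initial:
  assumes "nfa Q Sig delta I F" "q \<in> I"
  shows "depth_at_most Q Sig delta q (depth Q Sig delta I)"
proof -
  let ?lengths = "{length ws | qs ws. simple_init_path Q Sig delta I qs ws}"
  have "?lengths \<subseteq> {..card Q}"
  proof
    fix n assume "n \<in> ?lengths"
    then obtain qs ws where n: "n = length ws" and p: "simple_init_path Q Sig delta I qs ws"
      by blast
    have "length qs = card (set qs)" using p unfolding simple_init_path_def by (simp add: distinct_card)
    also have "\<dots> \<le> card Q" using p assms(1) unfolding simple_init_path_def nfa_def by (simp add: card_mono)
    finally show "n \<in> {..card Q}" using p n unfolding simple_init_path_def by simp
  qed
  then have "finite ?lengths" by (rule finite_subset) simp
  moreover have "simple_init_path Q Sig delta I qs ws"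
    if "simple_init_path Q Sig delta {q} qs ws" for qs ws
    using that assms(2) unfolding simple_init_path_def by auto
  ultimately show ?thesis unfolding depth_at_most_def depth_def by (blast intro: Max_ge)
qed

lemma rpoNFA_no_self_loop:
  assumes "rpoNFA Q Sig delta I F" "q \<in> Q" "a \<in> Sig" "delta q a \<noteq> {q}"
  shows "q \<notin> delta q a"
  using assms unfolding rpoNFA_def by blast

lemma rpoNFA_acceptance_simR_k_invariant:
  assumes rpo: "rpoNFA Q Sig delta I F" and complete: "complete_nfa Q Sig delta"
    and "q \<in> Q" "depth_at_most Q Sig delta q k" "u \<in> lists Sig" "v \<in> lists Sig"
    and "simR_k k u v" "steps delta {q} u \<inter> F \<noteq> {}"
  shows "steps delta {q} v \<inter> F \<noteq> {}"
proof -
  have po: "poNFA Q Sig delta I F" using rpo unfolding rpoNFA_def by blast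
  show ?thesis using assms(3-8)
  proof (induction k arbitrary: q u v)
    case 0
    have "delta q b = {q}" if "b \<in> Sig" for b
      using depth_at_most_0_sink[OF po 0(2) 0(1) that] complete 0(1) that
      unfolding complete_nfa_def by blast
    then show ?case using 0 by (auto simp: steps_self_loops)
  next
    case (Suc k)
    define S where "S = {b. delta q b = {q}}"
    show ?case
    proof (cases "set u \<subseteq> S")
      case True
      obtain u' where "prefix u' u" "sim_k (Suc k) v u'"
        using Suc.prems(5) unfolding simR_k_def by blast
      then have "set v \<subseteq> S"
        using True sim_k_Suc_imp_set_eq set_mono_prefix by blast
      then show ?thesis using True Suc.prems(6) by (simp add: S_def steps_self_loops subset_eq)
    next
      case False
      then obtain u0 a u' where u: "u = u0 @ a # u'" "set u0 \<subseteq> S" "a \<notin> S"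
        using split_list_first_prop[of u "\<lambda>c. c \<notin> S"] by blast
      obtain v0 v' where v: "v = v0 @ a # v'" "set v0 \<subseteq> S" "simR_k k u' v'"
        using simR_k_Suc_split_first_exit[OF Suc.prems(5) u] by blast
      have a: "a \<in> Sig" "u' \<in> lists Sig" "v' \<in> lists Sig" using Suc.prems(3,4) u(1) v(1) by auto
      obtain p where p: "p \<in> delta q a" "steps delta {p} u' \<inter> F \<noteq> {}"
        using Suc.prems(6) u steps_first_exit[of u0 delta q a u'] S_def by auto
      have "p \<noteq> q" using rpoNFA_no_self_loop[OF rpo Suc.prems(1) a(1)] u(3) p(1) S_def by blast
      moreover have "p \<in> Q" using po Suc.prems(1) a(1) p(1) unfolding poNFA_def nfa_def by blast
      ultimately have "steps delta {p} v' \<inter> F \<noteq> {}"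
        using Suc.IH depth_at_most_Suc_successor[OF po Suc.prems(2,1) a(1) p(1)] a(2,3) v(3) p(2)
        by blast
      then show ?thesis using v steps_first_exit[of v0 delta q a v'] p(1) S_def by auto
    qed
  qed
qed

theorem theorem4:
  fixes Q :: "'q set" and Sig :: "'a set" and delta :: "'q \<Rightarrow> 'a \<Rightarrow> 'q set"
    and I F :: "'q set"
  assumes "rpoNFA Q Sig delta I F"
    and "complete_nfa Q Sig delta"
  shows "k_R_trivial (depth Q Sig delta I) Sig (lang Sig delta I F)"
proof (rule k_R_trivial_if_closed)
  show "lang Sig delta I F \<subseteq> lists Sig" unfolding lang_def by blast
  have nfa: "nfa Q Sig delta I F" using assms(1) unfolding rpoNFA_def poNFA_def by blast
  fix v w
  assume w: "w \<in> lang Sig delta I F" and v: "v \<in> lists Sig"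
    and vw: "simR_k (depth Q Sig delta I) v w"
  then obtain q where q: "q \<in> I" "steps delta {q} w \<inter> F \<noteq> {}"
    unfolding lang_def using steps_eq_UN_singleton[of delta I w] by auto
  have "q \<in> Q" using q(1) nfa unfolding nfa_def by blast
  then have "steps delta {q} v \<inter> F \<noteq> {}"
    using rpoNFA_acceptance_simR_k_invariant[OF assms _ depth_at_most_initial[OF nfa q(1)]]
      w v simR_k_sym[OF vw] q(2) unfolding lang_def by blast
  then show "v \<in> lang Sig delta I F"
    using v q(1) steps_eq_UN_singleton[of delta I v] unfolding lang_def by auto
qed

end
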